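(* For an integer $k\ge 3$, let $G_k$ be the plane graph obtained from a cycle $w_0w_1\cdots w_{k-1}w_0$ by adding, for each $i\in\{0,\dots,k-1\}$, a new vertex $p_i$ in the outer face adjacent to $w_i$ and $w_{i+1}$ (indices modulo $k$), embedded so that the result is plane (the cycle bounds an inner face $f_1$, each $p_iw_iw_{i+1}$ bounds a triangular face, and the remaining face is the outer face $f_2$). Then $G_k$ is internally 3-connected, and every spanning tree of the plane dual $G_k^*$ has maximum degree at least $\lceil k/2\rceil$.
   Context: A plane graph is internally 3-connected if it is 2-connected and every 2-vertex cut consists of two vertices of the outer face boundary, each component of the graph minus the cut containing an outer-face vertex. $G_k^*$ denotes the plane dual of $G_k$, which may contain multiple edges. *)

theory Defs
  imports Complex_Main
begin

definition sg_adj :: "'v set \<Rightarrow> 'v set set \<Rightarrow> 'v \<Rightarrow> 'v \<Rightarrow> bool" where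
  "sg_adj V E x y \<longleftrightarrow> x \<in> V \<and> y \<in> V \<and> x \<noteq> y \<and> {x, y} \<in> E"

definition sg_conn :: "'v set \<Rightarrow> 'v set set \<Rightarrow> 'v \<Rightarrow> 'v \<Rightarrow> bool" where
  "sg_conn V E = (sg_adj V E)\<^sup>*\<^sup>*"

definition sg_connected :: "'v set \<Rightarrow> 'v set set \<Rightarrow> bool" where
  "sg_connected V E \<longleftrightarrow> V \<noteq> {} \<and> (\<forall>u\<in>V. \<forall>v\<in>V. sg_conn V E u v)"

definition two_connected :: "'v set \<Rightarrow> 'v set set \<Rightarrow> bool" where
  "two_connected V E \<longleftrightarrow> card V \<ge> 3 \<and> sg_connected V E \<and> (\<forall>x\<in>V. sg_connected (V - {x}) E)"

definition internally_3_connected :: "'v set \<Rightarrow> 'v set set \<Rightarrow> 'v set \<Rightarrow> bool" where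
  "internally_3_connected V E Outer \<longleftrightarrow> two_connected V E \<and>
     (\<forall>u v. u \<in> V \<and> v \<in> V \<and> u \<noteq> v \<and> \<not> sg_connected (V - {u, v}) E \<longrightarrow>
        u \<in> Outer \<and> v \<in> Outer \<and>
        (\<forall>x \<in> V - {u, v}. \<exists>w \<in> Outer - {u, v}. sg_conn (V - {u, v}) E x w))"

definition mg_adj :: "'e set \<Rightarrow> ('e \<Rightarrow> 'f set) \<Rightarrow> 'f \<Rightarrow> 'f \<Rightarrow> bool" where
  "mg_adj T ends u v \<longleftrightarrow> (\<exists>e\<in>T. ends e = {u, v})"

definition mg_conn :: "'e set \<Rightarrow> ('e \<Rightarrow> 'f set) \<Rightarrow> 'f \<Rightarrow> 'f \<Rightarrow> bool" where
  "mg_conn T ends = (mg_adj T ends)\<^sup>*\<^sup>*"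

text \<open>A spanning tree of the multigraph (V, D, ends): an edge subset T that connects all
  of V and is acyclic, i.e. contains no loop and no edge lying on a cycle (every edge of T joins
  two distinct vertices that are disconnected in T without that edge; in particular parallel
  edges form a cycle).\<close>
definition mg_spanning_tree :: "'f set \<Rightarrow> 'e set \<Rightarrow> ('e \<Rightarrow> 'f set) \<Rightarrow> 'e set \<Rightarrow> bool" where
  "mg_spanning_tree V D ends T \<longleftrightarrow> T \<subseteq> D \<and>
     (\<forall>u\<in>V. \<forall>v\<in>V. mg_conn T ends u v) \<and>
     (\<forall>e\<in>T. \<exists>u v. u \<noteq> v \<and> ends e = {u, v} \<and> \<not> mg_conn (T - {e}) ends u v)"

definition mg_degree :: "'e set \<Rightarrow> ('e \<Rightarrow> 'f set) \<Rightarrow> 'f \<Rightarrow> nat" where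
  "mg_degree T ends f = card {e \<in> T. f \<in> ends e}"

text \<open>Given the faces F of a plane graph and the boundary edge set bd f of each face, the dual
  multigraph has vertex set F and one dual edge e* for each edge e, joining the faces whose
  boundaries contain e.\<close>
definition dual_ends :: "'f set \<Rightarrow> ('f \<Rightarrow> 'e set) \<Rightarrow> 'e \<Rightarrow> 'f set" where
  "dual_ends F bd e = {f \<in> F. e \<in> bd f}"

datatype gvert = W nat | P nat
datatype gface = F1 | Tri nat | F2

definition Gk_V :: "nat \<Rightarrow> gvert set" where
  "Gk_V k = W ` {..<k} \<union> P ` {..<k}"

definition cyc_edge :: "nat \<Rightarrow> nat \<Rightarrow> gvert set" where
  "cyc_edge k i = {W i, W (Suc i mod k)}"

definition spoke1 :: "nat \<Rightarrow> gvert set" where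
  "spoke1 i = {P i, W i}"

definition spoke2 :: "nat \<Rightarrow> nat \<Rightarrow> gvert set" where
  "spoke2 k i = {P i, W (Suc i mod k)}"

definition Gk_E :: "nat \<Rightarrow> gvert set set" where
  "Gk_E k = (\<Union>i<k. {cyc_edge k i, spoke1 i, spoke2 k i})"

definition Gk_faces :: "nat \<Rightarrow> gface set" where
  "Gk_faces k = {F1, F2} \<union> Tri ` {..<k}"

text \<open>Face boundaries of the plane embedding: the cycle bounds the inner face F1, the triangle
  p_i w_i w_(i+1) bounds the face Tri i, and the outer face F2 is bounded by the remaining
  edges (all edges p_i w_i, p_i w_(i+1)).\<close>
fun Gk_bd :: "nat \<Rightarrow> gface \<Rightarrow> gvert set set" where
  "Gk_bd k F1 = cyc_edge k ` {..<k}"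
| "Gk_bd k (Tri i) = {cyc_edge k i, spoke1 i, spoke2 k i}"
| "Gk_bd k F2 = (\<Union>i<k. {spoke1 i, spoke2 k i})"

definition Gk_outer :: "nat \<Rightarrow> gvert set" where
  "Gk_outer k = \<Union> (Gk_bd k F2)"

end

theory Submission
  imports Defs
begin

text \<open>The vertices \<open>w\<^sub>0 p\<^sub>0 w\<^sub>1 p\<^sub>1 \<dots> w\<^bsub>k-1\<^esub> p\<^bsub>k-1\<^esub>\<close> form a Hamiltonian cycle of \<open>G\<^sub>k\<close>, so
  \<open>G\<^sub>k\<close> is 2-connected; as every vertex lies on the outer face, 2-connectivity already gives
  internal 3-connectivity. In the dual, each of the \<open>k\<close> triangular faces must be joined to \<open>f\<^sub>1\<close>
  by the spanning tree, so it is an end of some tree edge, and no edge bounds two triangles: the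
  tree has at least \<open>k\<close> edges. Every edge of \<open>G\<^sub>k\<close> bounds \<open>f\<^sub>1\<close> or \<open>f\<^sub>2\<close>, hence one of these two
  faces has degree at least \<open>k/2\<close> in the tree.\<close>

lemma sg_conn_sym: "sg_conn V E x y \<Longrightarrow> sg_conn V E y x"
  unfolding sg_conn_def
proof (induction rule: rtranclp_induct)
  case base
  then show ?case by simp
next
  case (step y z)
  have "sg_adj V E z y" using step(2) unfolding sg_adj_def by (auto simp: insert_commute)
  then show ?case using step(3) by (rule converse_rtranclp_into_rtranclp)
qed

lemma sg_connected_if_walk:
  assumes "0 < L"
    and walk_in: "\<And>j. j < L \<Longrightarrow> u j \<in> S"
    and walk_adj: "\<And>j. Suc j < L \<Longrightarrow> sg_adj S E (u j) (u (Suc j))"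
    and covers: "S \<subseteq> u ` {..<L}"
  shows "sg_connected S E"
proof -
  have from_start: "sg_conn S E (u 0) (u j)" if "j < L" for j
    using that
  proof (induction j)
    case 0
    then show ?case by (simp add: sg_conn_def)
  next
    case (Suc j)
    then show ?case using walk_adj unfolding sg_conn_def
      by (meson Suc_lessD rtranclp.rtrancl_into_rtrancl)
  qed
  show ?thesis unfolding sg_connected_def
  proof (intro conjI ballI)
    show "S \<noteq> {}" using walk_in \<open>0 < L\<close> by blast
  next
    fix x y assume "x \<in> S" "y \<in> S"
    then obtain i j where "i < L" "x = u i" "j < L" "y = u j" using covers by blast
    then show "sg_conn S E x y"
      using from_start sg_conn_sym unfolding sg_conn_def by (metis rtranclp_trans)
  qed
qed

lemma image_rotate_lessThan:
  assumes "m < n"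
  shows "(\<lambda>j. (Suc m + j) mod n) ` {..<n - 1} = {..<n} - {m}"
proof
  show "(\<lambda>j. (Suc m + j) mod n) ` {..<n - 1} \<subseteq> {..<n} - {m}"
  proof
    fix t assume "t \<in> (\<lambda>j. (Suc m + j) mod n) ` {..<n - 1}"
    then obtain j where j: "j < n - 1" and t: "t = (Suc m + j) mod n" by auto
    have "Suc m + j - n < n" using j assms by linarith
    then have "t \<noteq> m" using j t by (cases "Suc m + j < n") (auto simp: mod_if)
    then show "t \<in> {..<n} - {m}" using t assms by simp
  qed
next
  show "{..<n} - {m} \<subseteq> (\<lambda>j. (Suc m + j) mod n) ` {..<n - 1}"
  proof
    fix t assume "t \<in> {..<n} - {m}"
    then have t: "t < n" "t \<noteq> m" by auto
    show "t \<in> (\<lambda>j. (Suc m + j) mod n) ` {..<n - 1}"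
    proof (cases "m < t")
      case True
      then show ?thesis using t by (intro image_eqI[of _ _ "t - Suc m"]) auto
    next
      case False
      have "Suc m + (t + n - Suc m) = t + n" using assms by linarith
      then have "(Suc m + (t + n - Suc m)) mod n = t" using t by simp
      then show ?thesis using False t assms by (intro image_eqI[of _ _ "t + n - Suc m"]) auto
    qed
  qed
qed

lemma two_connected_if_hamiltonian_cycle:
  assumes n: "3 \<le> n" and c: "bij_betw c {..<n} V"
    and cycle_edge: "\<And>j. j < n \<Longrightarrow> {c j, c (Suc j mod n)} \<in> E"
  shows "two_connected V E"
proof -
  have c_in: "c j \<in> V" if "j < n" for j using c that bij_betwE by blast
  have c_eq_iff: "c i = c j \<longleftrightarrow> i = j" if "i < n" "j < n" for i j
    using c that by (metis bij_betw_imp_inj_on inj_on_eq_iff lessThan_iff)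
  have cycle_adj: "sg_adj S E (c j) (c (Suc j mod n))"
    if "j < n" "c j \<in> S" "c (Suc j mod n) \<in> S" for j S
  proof -
    have "Suc j mod n \<noteq> j" using that n by (cases "Suc j < n") (auto simp: mod_if)
    then show ?thesis
      using that cycle_edge c_eq_iff[of j "Suc j mod n"] n unfolding sg_adj_def by auto
  qed
  have "sg_connected V E"
  proof (rule sg_connected_if_walk[where u = c and L = n])
    show "sg_adj V E (c j) (c (Suc j))" if "Suc j < n" for j
      using cycle_adj[of j V] c_in that by simp
    show "V \<subseteq> c ` {..<n}" using c by (simp add: bij_betw_def)
  qed (use n c_in in auto)
  moreover have "sg_connected (V - {x}) E" if x: "x \<in> V" for x
  proof -
    obtain m where m: "m < n" "x = c m" using c x by (metis bij_betw_iff_bijections lessThan_iff)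
    let ?u = "\<lambda>j. c ((Suc m + j) mod n)"
    have rotate: "(\<lambda>j. (Suc m + j) mod n) ` {..<n - 1} = {..<n} - {m}"
      using image_rotate_lessThan[OF m(1)] .
    have u_in: "?u j \<in> V - {x}" if "j < n - 1" for j
    proof -
      have "(Suc m + j) mod n \<in> {..<n} - {m}" using rotate that by blast
      then show ?thesis using c_in c_eq_iff m by auto
    qed
    show ?thesis
    proof (rule sg_connected_if_walk[where u = ?u and L = "n - 1"])
      show "sg_adj (V - {x}) E (?u j) (?u (Suc j))" if "Suc j < n - 1" for j
        using cycle_adj[of "(Suc m + j) mod n" "V - {x}"] u_in[of j] u_in[of "Suc j"] that n
        by (simp add: mod_Suc_eq)
      show "V - {x} \<subseteq> ?u ` {..<n - 1}"
      proof
        fix y assume y: "y \<in> V - {x}"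
        then obtain t where t: "t < n" "y = c t" using c by (metis DiffD1 bij_betw_iff_bijections lessThan_iff)
        then have "t \<in> (\<lambda>j. (Suc m + j) mod n) ` {..<n - 1}" using rotate y m by auto
        then show "y \<in> ?u ` {..<n - 1}" using t by auto
      qed
    qed (use n u_in in auto)
  qed
  moreover have "card V = n" using c by (simp add: bij_betw_same_card[symmetric])
  ultimately show ?thesis unfolding two_connected_def using n by simp
qed

lemma internally_3_connected_if_all_outer:
  assumes "V \<subseteq> Outer" and "two_connected V E"
  shows "internally_3_connected V E Outer"
  using assms unfolding internally_3_connected_def by (auto simp: sg_conn_def)

lemma mg_conn_incident_edge:
  assumes "mg_conn T ends f g" and "f \<noteq> g"
  shows "\<exists>e\<in>T. f \<in> ends e"
proof -
  obtain h where "mg_adj T ends f h"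
    using assms unfolding mg_conn_def by (cases rule: converse_rtranclpE) auto
  then show ?thesis unfolding mg_adj_def by blast
qed

lemma card_le_card_edges_if_incident:
  assumes "finite T"
    and incident: "\<And>x. x \<in> X \<Longrightarrow> \<exists>e\<in>T. x \<in> ends e"
    and separated: "\<And>e x y. e \<in> T \<Longrightarrow> x \<in> X \<Longrightarrow> y \<in> X \<Longrightarrow> x \<in> ends e \<Longrightarrow> y \<in> ends e \<Longrightarrow> x = y"
  shows "card X \<le> card T"
proof -
  define edge where "edge x = (SOME e. e \<in> T \<and> x \<in> ends e)" for x
  have edge: "edge x \<in> T \<and> x \<in> ends (edge x)" if "x \<in> X" for x
  proof -
    have "\<exists>e. e \<in> T \<and> x \<in> ends e" using incident[OF that] by blast
    then show ?thesis unfolding edge_def by (rule someI_ex)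
  qed
  have "inj_on edge X"
  proof (rule inj_onI)
    fix x y assume "x \<in> X" "y \<in> X" "edge x = edge y"
    then show "x = y" using edge[of x] edge[of y] separated by metis
  qed
  moreover have "edge ` X \<subseteq> T" using edge by blast
  ultimately show ?thesis by (rule card_inj_on_le[OF _ _ \<open>finite T\<close>])
qed

lemma card_edges_le_degree_sum:
  assumes "finite T" and "\<And>e. e \<in> T \<Longrightarrow> a \<in> ends e \<or> b \<in> ends e"
  shows "card T \<le> mg_degree T ends a + mg_degree T ends b"
proof -
  have "T = {e \<in> T. a \<in> ends e} \<union> {e \<in> T. b \<in> ends e}" using assms(2) by blast
  then have "card T \<le> card {e \<in> T. a \<in> ends e} + card {e \<in> T. b \<in> ends e}"
    by (metis card_Un_le)
  then show ?thesis unfolding mg_degree_def .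
qed

lemma nat_ceiling_half_le: "k \<le> 2 * a \<Longrightarrow> nat \<lceil>real k / 2\<rceil> \<le> a"
  by (simp add: ceiling_le_iff nat_le_iff)

definition Gk_cycle :: "nat \<Rightarrow> gvert" where
  "Gk_cycle j = (if even j then W (j div 2) else P (j div 2))"

lemma Gk_cycle_inj: "Gk_cycle i = Gk_cycle j \<Longrightarrow> i = j"
proof -
  assume eq: "Gk_cycle i = Gk_cycle j"
  then have "even i \<longleftrightarrow> even j" and "i div 2 = j div 2"
    unfolding Gk_cycle_def by (auto split: if_splits)
  then show "i = j"
    by (cases "even i") (metis even_two_times_div_two odd_two_times_div_two_succ)+
qed

lemma bij_betw_Gk_cycle: "bij_betw Gk_cycle {..<2 * k} (Gk_V k)"
  unfolding bij_betw_def
proof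
  show "inj_on Gk_cycle {..<2 * k}" using Gk_cycle_inj by (rule inj_onI)
  have "W i = Gk_cycle (2 * i)" "P i = Gk_cycle (2 * i + 1)" for i
    by (simp_all add: Gk_cycle_def)
  then have "Gk_V k \<subseteq> Gk_cycle ` {..<2 * k}"
    unfolding Gk_V_def by fastforce
  moreover have "Gk_cycle j \<in> Gk_V k" if "j < 2 * k" for j
    using that unfolding Gk_cycle_def Gk_V_def by auto
  ultimately show "Gk_cycle ` {..<2 * k} = Gk_V k" by auto
qed

lemma Gk_cycle_edge:
  assumes "j < 2 * k"
  shows "{Gk_cycle j, Gk_cycle (Suc j mod (2 * k))} \<in> Gk_E k"
proof (cases "even j")
  case True
  then obtain i where i: "j = 2 * i" by blast
  then have "Suc j mod (2 * k) = 2 * i + 1" using assms by simp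
  then have "{Gk_cycle j, Gk_cycle (Suc j mod (2 * k))} = spoke1 i"
    using i by (simp add: Gk_cycle_def spoke1_def insert_commute)
  then show ?thesis using i assms unfolding Gk_E_def by auto
next
  case False
  then obtain i where i: "j = 2 * i + 1" by (blast elim: oddE)
  have "Suc j mod (2 * k) = 2 * (Suc i mod k)" using i by (simp add: mult_mod_right)
  then have "{Gk_cycle j, Gk_cycle (Suc j mod (2 * k))} = spoke2 k i"
    using i by (simp add: Gk_cycle_def spoke2_def)
  then show ?thesis using i assms unfolding Gk_E_def by auto
qed

lemma Gk_V_subset_outer: "Gk_V k \<subseteq> Gk_outer k"
  unfolding Gk_V_def Gk_outer_def by (auto simp: spoke1_def)

lemma Gk_internally_3_connected:
  assumes "3 \<le> k"
  shows "internally_3_connected (Gk_V k) (Gk_E k) (Gk_outer k)"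
  using Gk_V_subset_outer assms
  by (intro internally_3_connected_if_all_outer two_connected_if_hamiltonian_cycle
        [OF _ bij_betw_Gk_cycle Gk_cycle_edge]) auto

lemma finite_Gk_E: "finite (Gk_E k)"
  unfolding Gk_E_def by auto

lemma Gk_edge_bounds_F1_or_F2:
  assumes "e \<in> Gk_E k"
  shows "F1 \<in> dual_ends (Gk_faces k) (Gk_bd k) e \<or> F2 \<in> dual_ends (Gk_faces k) (Gk_bd k) e"
  using assms unfolding Gk_E_def dual_ends_def Gk_faces_def by auto

lemma cyc_edge_inj:
  assumes "3 \<le> k" "i < k" "j < k" "cyc_edge k i = cyc_edge k j"
  shows "i = j"
proof (rule ccontr)
  assume "i \<noteq> j"
  then have "i = Suc j mod k" "j = Suc i mod k"
    using assms(4) by (auto simp: cyc_edge_def doubleton_eq_iff)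
  then show False using assms(1-3) by (auto simp: mod_if split: if_splits)
qed

lemma Gk_triangles_edge_disjoint:
  assumes "3 \<le> k" "i < k" "j < k" "e \<in> Gk_bd k (Tri i)" "e \<in> Gk_bd k (Tri j)"
  shows "i = j"
proof -
  have tri_edge: "e = cyc_edge k l \<or> P l \<in> e" "P l' \<in> e \<Longrightarrow> l' = l"
    if "e \<in> Gk_bd k (Tri l)" for l l'
    using that by (auto simp: cyc_edge_def spoke1_def spoke2_def)
  show ?thesis
  proof (cases "e = cyc_edge k i")
    case True
    then have "e = cyc_edge k j" using tri_edge(1)[OF assms(5)] by (auto simp: cyc_edge_def)
    then show ?thesis using True cyc_edge_inj[OF assms(1-3)] by simp
  next
    case False
    then show ?thesis using tri_edge[OF assms(4)] tri_edge[OF assms(5)] by blast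
  qed
qed

lemma Gk_dual_spanning_tree_max_degree:
  assumes k: "3 \<le> k"
    and T: "mg_spanning_tree (Gk_faces k) (Gk_E k) (dual_ends (Gk_faces k) (Gk_bd k)) T"
  shows "\<exists>f \<in> Gk_faces k. nat \<lceil>real k / 2\<rceil> \<le> mg_degree T (dual_ends (Gk_faces k) (Gk_bd k)) f"
proof -
  let ?ends = "dual_ends (Gk_faces k) (Gk_bd k)"
  have faces: "F1 \<in> Gk_faces k" "F2 \<in> Gk_faces k" "Tri ` {..<k} \<subseteq> Gk_faces k"
    unfolding Gk_faces_def by auto
  have TE: "T \<subseteq> Gk_E k" and spans: "\<forall>u\<in>Gk_faces k. \<forall>v\<in>Gk_faces k. mg_conn T ?ends u v"
    using T unfolding mg_spanning_tree_def by auto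
  have finite_T: "finite T" using TE finite_Gk_E by (rule finite_subset)
  have "k = card (Tri ` {..<k})" by (simp add: card_image inj_on_def)
  also have "\<dots> \<le> card T"
  proof (rule card_le_card_edges_if_incident[OF finite_T])
    show "\<exists>e\<in>T. x \<in> ?ends e" if "x \<in> Tri ` {..<k}" for x
      using mg_conn_incident_edge[of T ?ends x F1] spans faces that by blast
    show "x = y" if triangles: "x \<in> Tri ` {..<k}" "y \<in> Tri ` {..<k}"
      and ends: "x \<in> ?ends e" "y \<in> ?ends e" for e x y
    proof -
      obtain i j where ij: "i < k" "x = Tri i" "j < k" "y = Tri j" using triangles by blast
      then have "e \<in> Gk_bd k (Tri i)" "e \<in> Gk_bd k (Tri j)"
        using ends unfolding dual_ends_def by blast+
      then show ?thesis using Gk_triangles_edge_disjoint[OF k] ij by blast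
    qed
  qed
  also have "\<dots> \<le> mg_degree T ?ends F1 + mg_degree T ?ends F2"
    using finite_T by (rule card_edges_le_degree_sum) (use TE Gk_edge_bounds_F1_or_F2 in blast)
  finally have "k \<le> mg_degree T ?ends F1 + mg_degree T ?ends F2" .
  then consider "k \<le> 2 * mg_degree T ?ends F1" | "k \<le> 2 * mg_degree T ?ends F2"
    by linarith
  then show ?thesis using faces(1,2) by cases (blast intro: nat_ceiling_half_le)+
qed

theorem mainTheorem7:
  fixes k :: nat
  assumes "k \<ge> 3"
  shows "internally_3_connected (Gk_V k) (Gk_E k) (Gk_outer k) \<and>
    (\<forall>T. mg_spanning_tree (Gk_faces k) (Gk_E k) (dual_ends (Gk_faces k) (Gk_bd k)) T \<longrightarrow>
       (\<exists>f \<in> Gk_faces k.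
          mg_degree T (dual_ends (Gk_faces k) (Gk_bd k)) f \<ge> nat \<lceil>real k / 2\<rceil>))"
  using Gk_internally_3_connected Gk_dual_spanning_tree_max_degree assms by blast

end
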